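(* Let $\mathbb{L}$ be a $\sigma$-complete orthomodular lattice and let $\mathcal{S}_b(\mathbb{L})$ be the set of bounded spectral families in $\mathbb{L}$. Then the map $E\mapsto f_E$ from $\mathcal{S}_b(\mathbb{L})$ to the set of functions $\mathcal{Q}(\mathbb{L})\to\mathbb{R}$, where $f_E(\mathfrak{B}):=\inf\{\lambda\in\mathbb{R}\mid E_\lambda\in\mathfrak{B}\}$, is injective.
   Context: A spectral family in a $\sigma$-complete lattice $\mathbb{L}$ (with $0$ and $1$) is a map $E:\mathbb{R}\to\mathbb{L}$, $\lambda\mapsto E_\lambda$, with (1) $E_\lambda\le E_\mu$ for $\lambda\le\mu$; (2) $E_\lambda=\bigwedge_{\mu>\lambda}E_\mu$; (3) $\bigwedge_\lambda E_\lambda=0$, $\bigvee_\lambda E_\lambda=1$ (infima/suprema over real index sets may be computed along the rationals). $E$ is bounded if there are $a\le b$ with $E_\lambda=0$ for $\lambda<a$ and $E_\lambda=1$ for $\lambda\ge b$. A dual ideal of $\mathbb{L}$ is a nonempty subset $\mathcal{J}$ with $0\notin\mathcal{J}$, upward closed, and closed under finite meets; a quasipoint is a maximal dual ideal. The Stone spectrum $\mathcal{Q}(\mathbb{L})$ is the set of quasipoints with the topology having as base the sets $\mathcal{Q}_a(\mathbb{L})=\{\mathfrak{B}\in\mathcal{Q}(\mathbb{L})\mid a\in\mathfrak{B}\}$, $a\in\mathbb{L}$. *)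

theory Defs
  imports "HOL-Analysis.Analysis" "HOL-Library.Complemented_Lattices"
begin

definition is_inf :: "'a::order \<Rightarrow> 'a set \<Rightarrow> bool" where
  "is_inf x A \<longleftrightarrow> (\<forall>a\<in>A. x \<le> a) \<and> (\<forall>y. (\<forall>a\<in>A. y \<le> a) \<longrightarrow> y \<le> x)"

definition is_sup :: "'a::order \<Rightarrow> 'a set \<Rightarrow> bool" where
  "is_sup x A \<longleftrightarrow> (\<forall>a\<in>A. a \<le> x) \<and> (\<forall>y. (\<forall>a\<in>A. a \<le> y) \<longrightarrow> x \<le> y)"

definition sigma_complete :: "'a::order itself \<Rightarrow> bool" where
  "sigma_complete _ \<longleftrightarrow>
     (\<forall>A :: 'a set. countable A \<longrightarrow> (\<exists>x. is_inf x A) \<and> (\<exists>x. is_sup x A))"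

definition spectral_family :: "(real \<Rightarrow> 'a::bounded_lattice) \<Rightarrow> bool" where
  "spectral_family E \<longleftrightarrow>
     (\<forall>l m. l \<le> m \<longrightarrow> E l \<le> E m) \<and>
     (\<forall>l. is_inf (E l) (E ` {l<..})) \<and>
     is_inf bot (range E) \<and> is_sup top (range E)"

definition bounded_spectral_family :: "(real \<Rightarrow> 'a::bounded_lattice) \<Rightarrow> bool" where
  "bounded_spectral_family E \<longleftrightarrow> spectral_family E \<and>
     (\<exists>a b. a \<le> b \<and> (\<forall>l. l < a \<longrightarrow> E l = bot) \<and> (\<forall>l. b \<le> l \<longrightarrow> E l = top))"

definition dual_ideal :: "'a::bounded_lattice set \<Rightarrow> bool" where
  "dual_ideal J \<longleftrightarrow> J \<noteq> {} \<and> bot \<notin> J \<and>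
     (\<forall>a b. a \<in> J \<and> a \<le> b \<longrightarrow> b \<in> J) \<and>
     (\<forall>a\<in>J. \<forall>b\<in>J. inf a b \<in> J)"

definition quasipoint :: "'a::bounded_lattice set \<Rightarrow> bool" where
  "quasipoint B \<longleftrightarrow> dual_ideal B \<and> (\<forall>J. dual_ideal J \<and> B \<subseteq> J \<longrightarrow> J = B)"

definition stone_spectrum :: "'a::bounded_lattice set set" where
  "stone_spectrum = {B. quasipoint B}"

definition observable_fun :: "(real \<Rightarrow> 'a::bounded_lattice) \<Rightarrow> 'a set \<Rightarrow> real" where
  "observable_fun E B = Inf {l. E l \<in> B}"

end

theory Submission
  imports Defs
begin

text \<open>If \<open>E \<noteq> F\<close>, say \<open>\<not> E\<^sub>l \<le> F\<^sub>l\<close>, right continuity of \<open>F\<close> gives \<open>m > l\<close> with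
  \<open>\<not> E\<^sub>l \<le> F\<^sub>m\<close>. Orthomodularity yields a nonzero \<open>c \<le> E\<^sub>l\<close> disjoint from \<open>F\<^sub>m\<close>, and by
  Zorn some quasipoint \<open>\<B>\<close> contains \<open>c\<close>. Then \<open>E\<^sub>l \<in> \<B>\<close> but \<open>F\<^sub>x \<notin> \<B>\<close> for \<open>x \<le> m\<close>, so
  \<open>f\<^sub>E(\<B>) \<le> l < m \<le> f\<^sub>F(\<B>)\<close>.\<close>

lemma orthomodular_disjoint_part:
  fixes a b :: "'a::orthomodular_lattice"
  assumes "\<not> a \<le> b"
  obtains c where "c \<noteq> bot" "c \<le> a" "inf c b = bot"
proof
  let ?c = "inf (- inf a b) a"
  have "sup (inf a b) ?c = a" by (rule orthomodular) simp
  then show "?c \<noteq> bot" using assms by (metis inf.absorb_iff1 sup_bot.right_neutral)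
  show "?c \<le> a" by simp
  have "inf ?c b = inf (- inf a b) (inf a b)" by (simp add: inf_assoc)
  then show "inf ?c b = bot" by (simp only: compl_inf_bot)
qed

lemma dual_ideal_upward: "dual_ideal J \<Longrightarrow> a \<in> J \<Longrightarrow> a \<le> b \<Longrightarrow> b \<in> J"
  unfolding dual_ideal_def by blast

lemma dual_ideal_top:
  assumes "dual_ideal J"
  shows "top \<in> J"
proof -
  from assms obtain a where "a \<in> J" unfolding dual_ideal_def by blast
  then show ?thesis using dual_ideal_upward[OF assms] top_greatest by blast
qed

lemma dual_ideal_inf_bot_notin:
  assumes "dual_ideal J" "inf a b = bot" "a \<in> J"
  shows "b \<notin> J"
proof
  assume "b \<in> J"
  with assms(1,3) have "inf a b \<in> J" unfolding dual_ideal_def by blast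
  with assms(1,2) show False unfolding dual_ideal_def by simp
qed

lemma dual_ideal_principal:
  fixes c :: "'a::bounded_lattice"
  assumes "c \<noteq> bot"
  shows "dual_ideal {x. c \<le> x}"
  unfolding dual_ideal_def
proof (intro conjI allI ballI impI)
  show "{x. c \<le> x} \<noteq> {}" by auto
  show "bot \<notin> {x. c \<le> x}" using assms le_bot by auto
  show "b \<in> {x. c \<le> x}" if "a \<in> {x. c \<le> x} \<and> a \<le> b" for a b
    using that order_trans by blast
  show "inf a b \<in> {x. c \<le> x}" if "a \<in> {x. c \<le> x}" "b \<in> {x. c \<le> x}" for a b
    using that by simp
qed

lemma dual_ideal_Union_chain:
  fixes C :: "'a::bounded_lattice set set"
  assumes "C \<noteq> {}" "chain\<^sub>\<subseteq> C" "\<And>J. J \<in> C \<Longrightarrow> dual_ideal J"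
  shows "dual_ideal (\<Union>C)"
  unfolding dual_ideal_def
proof (intro conjI allI ballI impI)
  from assms(1) obtain J where "J \<in> C" by blast
  then show "\<Union>C \<noteq> {}" using dual_ideal_top[OF assms(3)] by blast
next
  show "bot \<notin> \<Union>C" using assms(3) unfolding dual_ideal_def by blast
next
  show "b \<in> \<Union>C" if "a \<in> \<Union>C \<and> a \<le> b" for a b
    using that assms(3) dual_ideal_upward by blast
next
  fix a b assume "a \<in> \<Union>C" "b \<in> \<Union>C"
  then obtain X Y where XY: "X \<in> C" "a \<in> X" "Y \<in> C" "b \<in> Y" by auto
  with assms(2) have "X \<subseteq> Y \<or> Y \<subseteq> X" unfolding chain_subset_def by blast
  with XY obtain Z where "Z \<in> C" "a \<in> Z" "b \<in> Z" by blast
  with assms(3) show "inf a b \<in> \<Union>C" unfolding dual_ideal_def by blast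
qed

lemma quasipoint_exists:
  fixes c :: "'a::bounded_lattice"
  assumes "c \<noteq> bot"
  obtains B where "quasipoint B" "c \<in> B"
proof -
  let ?A = "{J. dual_ideal J \<and> c \<in> J}"
  have "\<exists>U\<in>?A. \<forall>X\<in>C. X \<subseteq> U" if "C \<in> chains ?A" for C
  proof (cases "C = {}")
    case True
    then show ?thesis using dual_ideal_principal[OF assms] by auto
  next
    case False
    from that have sub: "C \<subseteq> ?A" and "chain\<^sub>\<subseteq> C" unfolding chains_def by auto
    then have "dual_ideal (\<Union>C)" using False by (intro dual_ideal_Union_chain) auto
    moreover have "c \<in> \<Union>C" using False sub by auto
    ultimately show ?thesis by auto
  qed
  then obtain M where "M \<in> ?A" "\<forall>X\<in>?A. M \<subseteq> X \<longrightarrow> X = M"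
    using Zorn_Lemma2[of ?A] by blast
  then show thesis using that unfolding quasipoint_def by auto
qed

lemma spectral_family_mono: "spectral_family E \<Longrightarrow> l \<le> m \<Longrightarrow> E l \<le> E m"
  unfolding spectral_family_def by blast

lemma spectral_family_not_le_right:
  assumes "spectral_family F" "\<not> a \<le> F l"
  obtains m where "l < m" "\<not> a \<le> F m"
proof -
  have "is_inf (F l) (F ` {l<..})" using assms(1) unfolding spectral_family_def by blast
  with assms(2) that show thesis unfolding is_inf_def by blast
qed

lemma bounded_spectral_family_observable_fun_le:
  assumes "bounded_spectral_family E" "dual_ideal B" "E l \<in> B"
  shows "observable_fun E B \<le> l"
proof -
  obtain a where a: "\<forall>x<a. E x = bot" using assms(1) unfolding bounded_spectral_family_def by blast
  have "bot \<notin> B" using assms(2) unfolding dual_ideal_def by blast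
  with a have "bdd_below {x. E x \<in> B}" by (metis (mono_tags) bdd_belowI mem_Collect_eq not_le)
  with assms(3) show ?thesis unfolding observable_fun_def by (intro cInf_lower) auto
qed

lemma bounded_spectral_family_observable_fun_ge:
  assumes "bounded_spectral_family F" "dual_ideal B" "F m \<notin> B"
  shows "m \<le> observable_fun F B"
proof -
  obtain b where "\<forall>x\<ge>b. F x = top" using assms(1) unfolding bounded_spectral_family_def by blast
  then have "F b \<in> B" using dual_ideal_top[OF assms(2)] by simp
  then have "{x. F x \<in> B} \<noteq> {}" by blast
  moreover have "m \<le> x" if "F x \<in> B" for x
  proof (rule ccontr)
    assume "\<not> m \<le> x"
    with assms(1) have "F x \<le> F m"
      unfolding bounded_spectral_family_def by (simp add: spectral_family_mono)
    with that assms(2,3) show False using dual_ideal_upward by blast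
  qed
  ultimately show ?thesis unfolding observable_fun_def by (intro cInf_greatest) auto
qed

lemma bounded_spectral_family_le_of_observable_fun_eq:
  fixes E F :: "real \<Rightarrow> 'a::orthomodular_lattice"
  assumes E: "bounded_spectral_family E" and F: "bounded_spectral_family F"
    and eq: "\<And>B. quasipoint B \<Longrightarrow> observable_fun E B = observable_fun F B"
  shows "E l \<le> F l"
proof (rule ccontr)
  assume "\<not> E l \<le> F l"
  with F obtain m where "l < m" "\<not> E l \<le> F m"
    unfolding bounded_spectral_family_def by (blast elim: spectral_family_not_le_right)
  obtain c where c: "c \<noteq> bot" "c \<le> E l" "inf c (F m) = bot"
    using orthomodular_disjoint_part[OF \<open>\<not> E l \<le> F m\<close>] .
  obtain B where B: "quasipoint B" "c \<in> B" using quasipoint_exists[OF c(1)] .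
  then have dB: "dual_ideal B" unfolding quasipoint_def by blast
  have "E l \<in> B" using dual_ideal_upward[OF dB B(2) c(2)] .
  then have "observable_fun E B \<le> l" by (rule bounded_spectral_family_observable_fun_le[OF E dB])
  have "F m \<notin> B" using dual_ideal_inf_bot_notin[OF dB c(3) B(2)] .
  then have "m \<le> observable_fun F B" by (rule bounded_spectral_family_observable_fun_ge[OF F dB])
  with \<open>observable_fun E B \<le> l\<close> show False using eq[OF B(1)] \<open>l < m\<close> by linarith
qed

theorem proposition2p7:
  assumes "sigma_complete TYPE('a::orthomodular_lattice)"
  shows "inj_on (\<lambda>E. restrict (observable_fun E) (stone_spectrum :: 'a set set))
                {E :: real \<Rightarrow> 'a. bounded_spectral_family E}"
proof (rule inj_onI)
  fix E F :: "real \<Rightarrow> 'a"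
  assume "E \<in> {E. bounded_spectral_family E}" "F \<in> {E. bounded_spectral_family E}"
    and r: "restrict (observable_fun E) stone_spectrum = restrict (observable_fun F) stone_spectrum"
  then have E: "bounded_spectral_family E" and F: "bounded_spectral_family F" by auto
  have eq: "observable_fun E B = observable_fun F B" if "quasipoint B" for B
    using fun_cong[OF r, of B] that unfolding stone_spectrum_def by simp
  show "E = F"
  proof
    fix l
    show "E l = F l"
      using bounded_spectral_family_le_of_observable_fun_eq[OF E F eq]
        bounded_spectral_family_le_of_observable_fun_eq[OF F E eq[symmetric]]
      by (rule order.antisym)
  qed
qed

end
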